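(* Let $d \geq 1$ and let $A \subset \mathbb{Z}^d$ be a set consisting of exactly $d+2$ elements such that the difference set $A - A = \{a - a' : a, a' \in A\}$ generates $\mathbb{Z}^d$ additively. Let $\Delta_A$ denote the convex hull of $A$ and $\mathrm{vol}(\Delta_A)$ its $d$-dimensional volume. Then \[ |hA| = \binom{h+d+1}{d+1} \qquad \text{whenever } 0 \leq h < \mathrm{vol}(\Delta_A)\cdot d! - d - 1, \] and \[ |hA| = \binom{h+d+1}{d+1} - \binom{h - \mathrm{vol}(\Delta_A)\cdot d! + d + 1}{d+1} \qquad \text{whenever } h \geq \mathrm{vol}(\Delta_A)\cdot d! - d - 1 . \]
   Context: For a finite set $A \subset \mathbb{Z}^d$ and an integer $h \geq 0$, the $h$-fold sumset is $hA = \{x_1 + \cdots + x_h : x_i \in A\}$ (with $0A = \{0\}$); $h$ ranges over integers. *)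

theory Defs
  imports "HOL-Analysis.Analysis"
begin

fun sumset :: "nat \<Rightarrow> 'a::comm_monoid_add set \<Rightarrow> 'a set" where
  "sumset 0 A = {0}"
| "sumset (Suc h) A = {x + y | x y. x \<in> sumset h A \<and> y \<in> A}"

definition diffset :: "'a::ab_group_add set \<Rightarrow> 'a set" where
  "diffset A = {a - b | a b. a \<in> A \<and> b \<in> A}"

definition add_subgroup_gen :: "'a::ab_group_add set \<Rightarrow> 'a set" where
  "add_subgroup_gen S = \<Inter>{G. S \<subseteq> G \<and> 0 \<in> G \<and> (\<forall>x\<in>G. \<forall>y\<in>G. x - y \<in> G)}"

definition lat_to_real :: "int ^ 'd \<Rightarrow> real ^ 'd" where
  "lat_to_real x = (\<chi> i. real_of_int (x $ i))"

end

(*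
  Since A - A generates Z^d, the integer affine relations of the d + 2 points of A
  (sum r_a = 0 and sum r_a a = 0) are the integer multiples of one primitive relation lambda.
  Let P and N be the multisets of positive and negative parts of lambda: they have the same
  size m and the same sum. Every element of hA is the sum of exactly one h-element multiset
  over A that does not contain P (trade P for N until P is gone; two such multisets with equal
  sums differ by a nonzero multiple of lambda, so one of them would contain P). Hence
  |hA| = C(h+d+1, d+1) - C(h-m+d+1, d+1).
  By Cramer's rule the coefficients of the relation are the maximal minors of the points, i.e.
  |lambda_a| = d! vol(conv (A - {a})); they are coprime because A - A generates Z^d. The
  simplices conv (A - {a}) with lambda_a < 0 triangulate conv A, so d! vol(conv A) = m.
*)

theory Submission
  imports Defs
begin

section \<open>Volumes of simplices for arbitrary finite index types\<close>

(* The library's content_simplex needs a well-ordered index type; ranked is a copy of a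
   finite type, ordered through to_nat, to which volumes and determinants are transferred. *)
typedef 'a ranked = "UNIV :: 'a set" by simp

instantiation ranked :: (finite) linorder
begin
definition less_eq_ranked :: "'a ranked \<Rightarrow> 'a ranked \<Rightarrow> bool"
  where "x \<le> y \<longleftrightarrow> to_nat (Rep_ranked x) \<le> to_nat (Rep_ranked y)"
definition less_ranked :: "'a ranked \<Rightarrow> 'a ranked \<Rightarrow> bool"
  where "x < y \<longleftrightarrow> to_nat (Rep_ranked x) < to_nat (Rep_ranked y)"
instance
  by standard (auto simp: less_eq_ranked_def less_ranked_def Rep_ranked_inject[symmetric])
end

instance ranked :: (finite) wellorder
proof
  fix P :: "'a ranked \<Rightarrow> bool" and a
  assume step: "\<And>x. (\<And>y. y < x \<Longrightarrow> P y) \<Longrightarrow> P x"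
  show "P a"
    by (induction "to_nat (Rep_ranked a)" arbitrary: a rule: less_induct)
       (rule step, auto simp: less_ranked_def)
qed

lemma bij_Rep_ranked: "bij Rep_ranked"
  by (metis Rep_ranked_inject Abs_ranked_inverse UNIV_I injI surjI bijI)

instance ranked :: (finite) finite
  by standard (metis bij_Rep_ranked bij_is_inj finite finite_imageD)

lemma card_ranked: "CARD('a::finite ranked) = CARD('a)"
  using bij_Rep_ranked by (rule bij_betw_same_card)

lemma det_reindex:
  fixes A :: "'a::comm_ring_1^'n::finite^'n" and r :: "'m::finite \<Rightarrow> 'n"
  assumes r: "bij r"
  shows "det (\<chi> i j. A $ r i $ r j) = det A"
proof -
  let ?conj = "\<lambda>q. r \<circ> q \<circ> inv r"
  have sign_conj: "sign (?conj q) = sign q" if "q permutes UNIV" for q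
  proof -
    have "map_permutation UNIV r q = ?conj q"
      using r by (simp add: map_permutation_def restrict_id_def bij_is_surj o_def)
    then show ?thesis
      using sign_map_permutation[OF bij_is_inj[OF r] that] by simp
  qed
  have prod_conj: "(\<Prod>j\<in>UNIV. A $ j $ r (q (inv r j))) = (\<Prod>i\<in>UNIV. A $ r i $ r (q i))" for q
    using prod.reindex_bij_betw[OF r, of "\<lambda>j. A $ j $ ?conj q j"] r by (simp add: bij_is_inj)
  have inv_conj: "inv r \<circ> ?conj q \<circ> r = q" "?conj (inv r \<circ> p \<circ> r) = p" for p q
    using r by (simp_all add: fun_eq_iff bij_is_inj bij_is_surj surj_f_inv_f)
  have conj_permutes: "?conj q permutes UNIV" if "q permutes UNIV" for q
    using that r by (auto intro!: bij_imp_permutes bij_comp bij_imp_bij_inv dest: permutes_imp_bij)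
  have conj_inv_permutes: "inv r \<circ> p \<circ> r permutes UNIV" if "p permutes UNIV" for p
    using that r by (auto intro!: bij_imp_permutes bij_comp bij_imp_bij_inv dest: permutes_imp_bij)
  show ?thesis
    unfolding det_def
  proof (rule sum.reindex_bij_witness[where j = ?conj and i = "\<lambda>p. inv r \<circ> p \<circ> r"])
    fix q :: "'m \<Rightarrow> 'm" assume "q \<in> {q. q permutes UNIV}"
    then have q: "q permutes UNIV" by simp
    show "inv r \<circ> ?conj q \<circ> r = q" by (rule inv_conj(1))
    show "?conj q \<in> {p. p permutes UNIV}" using conj_permutes[OF q] by simp
    show "of_int (sign (?conj q)) * (\<Prod>j\<in>UNIV. A $ j $ ?conj q j)
        = of_int (sign q) * (\<Prod>i\<in>UNIV. (\<chi> i j. A $ r i $ r j) $ i $ q i)"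
      unfolding sign_conj[OF q] using prod_conj by simp
  next
    fix p :: "'n \<Rightarrow> 'n" assume "p \<in> {p. p permutes UNIV}"
    then show "?conj (inv r \<circ> p \<circ> r) = p" "inv r \<circ> p \<circ> r \<in> {q. q permutes UNIV}"
      by (simp_all add: inv_conj conj_inv_permutes)
  qed
qed

lemma prod_Basis_vec: "(\<Prod>b\<in>Basis. v \<bullet> b) = (\<Prod>i\<in>UNIV. v $ i)" for v :: "real^'n"
  by (simp add: Basis_vec_def cart_eq_inner_axis axis_eq_axis prod.UNION_disjoint)

lemma distr_lborel_reindex:
  fixes r :: "'m::finite \<Rightarrow> 'n::finite"
  assumes r: "bij r"
  shows "distr lborel borel (\<lambda>x::real^'n. \<chi> i. x $ r i) = (lborel :: (real^'m) measure)"
proof (rule lborel_eqI[symmetric])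
  let ?R = "\<lambda>x::real^'n. \<chi> i. x $ r i" and ?S = "\<lambda>y::real^'m. \<chi> j. y $ inv r j"
  have meas: "?R \<in> borel_measurable borel"
    by (intro borel_measurable_continuous_onI continuous_on_vec_lambda
        continuous_on_component continuous_on_id)
  fix l u :: "real^'m" assume "\<And>b. b \<in> Basis \<Longrightarrow> l \<bullet> b \<le> u \<bullet> b"
  then have le: "l $ i \<le> u $ i" for i
    by (simp add: cart_eq_inner_axis Basis_vec_def) blast
  have "?R -` box l u = box (?S l) (?S u)"
    using r by (auto simp: mem_box_cart bij_inv_eq_iff) (metis bij_inv_eq_iff)+
  have "emeasure (distr lborel borel ?R) (box l u) = (\<Prod>j\<in>UNIV. u $ inv r j - l $ inv r j)"
  proof -
    have "\<forall>b\<in>Basis. ?S l \<bullet> b \<le> ?S u \<bullet> b"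
      using le by (auto simp: Basis_vec_def cart_eq_inner_axis[symmetric])
    then show ?thesis
      using \<open>?R -` box l u = _\<close>
          by (simp add: emeasure_distr meas emeasure_lborel_box_eq prod_Basis_vec)
  qed
  also have "\<dots> = (\<Prod>i\<in>UNIV. u $ i - l $ i)"
    using prod.reindex_bij_betw[OF bij_imp_bij_inv[OF r], of "\<lambda>i. u $ i - l $ i"] by simp
  finally show "emeasure (distr lborel borel ?R) (box l u) = (\<Prod>b\<in>Basis. (u - l) \<bullet> b)"
    by (simp add: prod_Basis_vec)
qed simp

lemma measure_reindex_compact:
  fixes r :: "'m::finite \<Rightarrow> 'n::finite" and K :: "(real^'n) set"
  assumes r: "bij r" and K: "compact K"
  shows "measure lebesgue ((\<lambda>x. \<chi> i. x $ r i) ` K) = measure lebesgue K"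
proof -
  let ?R = "\<lambda>x::real^'n. \<chi> i. x $ r i"
  have cont: "continuous_on UNIV ?R"
    by (intro continuous_on_vec_lambda continuous_on_component continuous_on_id)
  have inj: "inj ?R"
    using r by (auto intro!: injI simp: vec_eq_iff) (metis bij_inv_eq_iff)
  have "?R ` K \<in> sets borel"
    using compact_continuous_image[OF continuous_on_subset[OF cont] K]
    by (simp add: borel_closed compact_imp_closed)
  then have "measure lborel (?R ` K) = measure lborel K"
    using measure_distr[of ?R lborel borel "?R ` K"] cont
    by (simp add: distr_lborel_reindex[OF r] inj_vimage_image_eq[OF inj]
            borel_measurable_continuous_onI)
  moreover have "K \<in> sets lborel" "?R ` K \<in> sets lborel"
    using \<open>?R ` K \<in> sets borel\<close> K by (simp_all add: borel_closed compact_imp_closed)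
  ultimately show ?thesis
    by simp
qed

theorem measure_simplex_cart:
  fixes x0 :: "real^'n::finite" and f :: "'n \<Rightarrow> real^'n"
  assumes f: "inj f" and x0: "x0 \<notin> range f"
  shows "measure lebesgue (convex hull (insert x0 (range f)))
           = \<bar>det (\<chi> i j. f j $ i - x0 $ i)\<bar> / fact CARD('n)"
proof -
  let ?r = "Rep_ranked :: 'n ranked \<Rightarrow> 'n"
  let ?R = "\<lambda>x::real^'n. \<chi> i. x $ ?r i"
  let ?f = "?R \<circ> f \<circ> ?r"
  have r: "bij ?r"
    by (rule bij_Rep_ranked)
  have R: "linear ?R" "inj ?R"
    using r by (auto intro!: linearI injI simp: vec_eq_iff) (metis bij_inv_eq_iff)
  have f': "inj ?f"
    using R f r by (simp add: inj_compose bij_is_inj)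
  have x0': "?R x0 \<notin> range ?f"
  proof
    assume "?R x0 \<in> range ?f"
    then obtain y where "?R x0 = ?R (f (?r y))" by auto
    with R(2) have "x0 = f (?r y)" by (rule injD)
    with x0 show False by auto
  qed
  have "range ?f = (?R \<circ> f) ` range ?r"
    by (simp only: image_comp)
  also have "\<dots> = ?R ` range f"
    using bij_is_surj[OF r] by (simp only: image_comp)
  finally have "range ?f = ?R ` range f" .
  then have "?R ` (convex hull (insert x0 (range f))) = convex hull (insert (?R x0) (range ?f))"
    by (simp add: convex_hull_linear_image[OF R(1)])
  then have "measure lebesgue (convex hull (insert x0 (range f)))
      = measure lborel (convex hull (insert (?R x0) (range ?f)))"
    using measure_reindex_compact[OF r, of "convex hull (insert x0 (range f))"]
    by (simp add: finite_imp_compact_convex_hull borel_closed compact_imp_closed)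
  also have "\<dots> = \<bar>det (\<chi> i j. ?f j $ i - ?R x0 $ i)\<bar> / fact CARD('n ranked)"
  proof (rule content_simplex)
    show "bij_betw ?f UNIV (insert (?R x0) (range ?f) - {?R x0})"
      unfolding Diff_insert_absorb[OF x0'] by (rule inj_on_imp_bij_betw[OF f'])
    show "card (insert (?R x0) (range ?f)) = Suc CARD('n ranked)"
      using card_image[OF f'] x0' by simp
  qed simp_all
  also have "det (\<chi> i j. ?f j $ i - ?R x0 $ i) = det (\<chi> i j. f j $ i - x0 $ i)"
    using det_reindex[OF r, of "\<chi> i j. f j $ i - x0 $ i"] by simp
  finally show ?thesis
    by (simp add: card_ranked)
qed

lemma det_add_rank_one_rows:
  fixes Z :: "'a::comm_ring_1^'n::finite^'n"
  shows "det (\<chi> i. row i Z + t i *s x)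
      = det Z + (\<Sum>j\<in>UNIV. t j * det (\<chi> i. if i = j then x else row i Z))"
proof -
  have "det (\<chi> i. if i \<in> S then row i Z + t i *s x else row i Z)
      = det Z + (\<Sum>j\<in>S. t j * det (\<chi> i. if i = j then x else row i Z))" if "finite S" for S
    using that
  proof (induction S arbitrary: Z rule: finite_induct)
    case empty
    show ?case by (simp add: row_def)
  next
    case (insert k S)
    define Z' where "Z' = (\<chi> i. if i = k then row k Z + t k *s x else row i Z)"
    have row_Z': "row i Z' = (if i = k then row k Z + t k *s x else row i Z)" for i
      by (simp add: Z'_def row_def)
    have "(\<chi> i. if i \<in> insert k S then row i Z + t i *s x else row i Z)
        = (\<chi> i. if i \<in> S then row i Z' + t i *s x else row i Z')"
      using insert.hyps by (auto simp: row_Z')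
    moreover have "det Z' = det Z + t k * det (\<chi> i. if i = k then x else row i Z)"
    proof -
      have "(\<chi> i. if i = k then row k Z else row i Z) = Z"
        by (simp add: row_def vec_eq_iff)
      then show ?thesis
        unfolding Z'_def det_row_add det_row_mul by simp
    qed
    moreover have "det (\<chi> i. if i = j then x else row i Z')
        = det (\<chi> i. if i = j then x else row i Z)"
      if "j \<in> S" for j
    proof -
      define M where "M = (\<chi> i. if i = j then x else row i Z)"
      have "k \<noteq> j" using insert.hyps that by auto
      then have "(\<chi> i. if i = j then x else row i Z')
          = (\<chi> i. if i = k then row k M + t k *s row j M else row i M)"
        by (simp add: M_def Z'_def row_def vec_eq_iff)
      then show ?thesis
        using det_row_operation[OF \<open>k \<noteq> j\<close>, of M "t k"] by (simp add: M_def)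
    qed
    ultimately show ?case
      using insert.IH[of Z'] insert.hyps by (simp add: algebra_simps)
  qed
  from this[of UNIV] show ?thesis by simp
qed

lemma det_add_rank_one_columns:
  fixes Z :: "'a::comm_ring_1^'n::finite^'n"
  shows "det (\<chi> i j. Z $ i $ j + t j * x $ i)
           = det Z + (\<Sum>j\<in>UNIV. t j * det (\<chi> i l. if l = j then x $ i else Z $ i $ l))"
proof -
  have col: "(\<chi> i. if i = j then x else row i (transpose Z))
      = transpose (\<chi> i l. if l = j then x $ i else Z $ i $ l)" for j
    by (simp add: transpose_def row_def vec_eq_iff)
  have "det (\<chi> i j. Z $ i $ j + t j * x $ i) = det (transpose (\<chi> i j. Z $ i $ j + t j * x $ i))"
    by simp
  also have "transpose (\<chi> i j. Z $ i $ j + t j * x $ i) = (\<chi> i. row i (transpose Z) + t i *s x)"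
    by (simp add: transpose_def row_def vec_eq_iff)
  also have "det \<dots> = det (transpose Z)
      + (\<Sum>j\<in>UNIV. t j * det (\<chi> i. if i = j then x else row i (transpose Z)))"
    by (rule det_add_rank_one_rows)
  finally show ?thesis
    by (simp add: col)
qed

lemma det_Ints:
  fixes M :: "real^'n::finite^'n"
  assumes "\<And>i j. M $ i $ j \<in> \<int>"
  shows "det M \<in> \<int>"
  unfolding det_def using assms by (intro Ints_sum Ints_mult Ints_prod) auto

section \<open>Sumsets as images of multisets\<close>

lemma sumset_image:
  assumes "f 0 = 0" and "\<And>x y. f (x + y) = f x + f y"
  shows "sumset h (f ` A) = f ` sumset h A"
proof (induction h)
  case (Suc h)
  have "sumset (Suc h) (f ` A) = {f x + f y |x y. x \<in> sumset h A \<and> y \<in> A}"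
    using Suc by auto
  also have "\<dots> = f ` sumset (Suc h) A"
    by (auto simp: assms(2)[symmetric])
  finally show ?case .
qed (simp add: assms(1))

lemma multisets_of_size_Suc:
  "M \<in> multisets_of_size A (Suc h) \<longleftrightarrow> (\<exists>a N. M = add_mset a N \<and> a \<in> A \<and> N \<in> multisets_of_size A h)"
  by (auto simp: multisets_of_size_def)
     (metis size_eq_Suc_imp_eq_union insert_subset set_mset_add_mset_insert size_add_mset
           Suc_inject)

lemma sumset_eq_image_sum_mset: "sumset h A = sum_mset ` multisets_of_size A h"
proof (induction h)
  case (Suc h)
  show ?case
  proof (intro set_eqI iffI)
    fix z assume "z \<in> sumset (Suc h) A"
    then obtain N a where "N \<in> multisets_of_size A h" "a \<in> A" "z = sum_mset N + a"
      using Suc by auto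
    then show "z \<in> sum_mset ` multisets_of_size A (Suc h)"
      by (intro image_eqI[where x = "add_mset a N"]) (auto simp: multisets_of_size_Suc add.commute)
  next
    fix z assume "z \<in> sum_mset ` multisets_of_size A (Suc h)"
    then obtain a N where "z = sum_mset (add_mset a N)" "a \<in> A" "N \<in> multisets_of_size A h"
      by (auto simp: multisets_of_size_Suc)
    then have "z = sum_mset N + a" "sum_mset N \<in> sumset h A"
      using Suc by (simp_all add: add.commute)
    with \<open>a \<in> A\<close> show "z \<in> sumset (Suc h) A"
      by auto
  qed
qed simp

lemma size_eq_sum_count:
  assumes "finite B" "set_mset M \<subseteq> B"
  shows "size M = (\<Sum>a\<in>B. count M a)"
  unfolding size_multiset_overloaded_eq
  by (rule sum.mono_neutral_left) (use assms in \<open>auto simp: count_eq_zero_iff\<close>)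

lemma sum_mset_eq_sum_count:
  fixes M :: "'a::real_vector multiset"
  assumes "finite B" "set_mset M \<subseteq> B"
  shows "sum_mset M = (\<Sum>a\<in>B. real (count M a) *\<^sub>R a)"
  using assms(2)
proof (induction M)
  case (add x M)
  have "(\<Sum>a\<in>B. real (count (add_mset x M) a) *\<^sub>R a)
      = (\<Sum>a\<in>B. real (count M a) *\<^sub>R a + (if a = x then x else 0))"
    by (intro sum.cong) (auto simp: algebra_simps)
  also have "\<dots> = (\<Sum>a\<in>B. real (count M a) *\<^sub>R a) + x"
    using add.prems assms(1) by (simp add: sum.distrib)
  finally show ?case
    using add by (simp add: add.commute)
qed simp

section \<open>Primitive affine relations and the size of sumsets\<close>

definition affine_relation :: "'a::real_vector set \<Rightarrow> ('a \<Rightarrow> real) \<Rightarrow> bool" where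
  "affine_relation B r \<longleftrightarrow> (\<Sum>a\<in>B. r a) = 0 \<and> (\<Sum>a\<in>B. r a *\<^sub>R a) = 0"

lemma affine_relation_count_diff:
  assumes "finite B" "M \<in> multisets_of_size B h" "N \<in> multisets_of_size B h"
      "sum_mset M = sum_mset N"
  shows "affine_relation B (\<lambda>a. real (count M a) - real (count N a))"
proof -
  have sub: "set_mset M \<subseteq> B" "set_mset N \<subseteq> B" and "size M = size N"
    using assms(2,3) by (auto simp: multisets_of_size_def)
  then have "(\<Sum>a\<in>B. real (count M a)) = (\<Sum>a\<in>B. real (count N a))"
    using size_eq_sum_count[OF assms(1)] by (metis of_nat_sum)
  then show ?thesis
    using assms(4) sum_mset_eq_sum_count[OF assms(1) sub(1)]
          sum_mset_eq_sum_count[OF assms(1) sub(2)]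
    by (simp add: affine_relation_def sum_subtractf scaleR_diff_left)
qed

locale primitive_affine_relation =
  fixes B :: "'a::real_vector set" and lam :: "'a \<Rightarrow> int"
  assumes finite_B: "finite B"
    and relation: "affine_relation B (\<lambda>a. of_int (lam a))"
    and nontrivial: "\<exists>a\<in>B. lam a \<noteq> 0"
    and integer_relations: "\<And>r. affine_relation B (\<lambda>a. of_int (r a)) \<Longrightarrow> \<exists>k. \<forall>a\<in>B. r a = k * lam a"
begin

definition pos_part :: "'a multiset" where
  "pos_part = (\<Sum>a\<in>B. replicate_mset (nat (lam a)) a)"

definition neg_part :: "'a multiset" where
  "neg_part = (\<Sum>a\<in>B. replicate_mset (nat (- lam a)) a)"

lemma count_pos_part: "count pos_part a = (if a \<in> B then nat (lam a) else 0)"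
  and count_neg_part: "count neg_part a = (if a \<in> B then nat (- lam a) else 0)"
  using finite_B by (simp_all add: pos_part_def neg_part_def count_sum sum.delta')

lemma set_mset_pos_part: "set_mset pos_part \<subseteq> B"
  and set_mset_neg_part: "set_mset neg_part \<subseteq> B"
  by (auto simp: count_pos_part count_neg_part simp flip: count_greater_zero_iff split: if_splits)

lemma size_neg_part: "size neg_part = size pos_part"
proof -
  have "int (size neg_part) - int (size pos_part) = - (\<Sum>a\<in>B. lam a)"
    by (simp add: neg_part_def pos_part_def sum_subtractf[symmetric] flip: sum_negf)
       (rule sum.cong; auto)
  then show ?thesis
    using relation by (simp add: affine_relation_def flip: of_int_sum)
qed

lemma size_pos_part_pos: "size pos_part > 0"
proof -
  obtain a where "a \<in> B" "lam a \<noteq> 0"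
    using nontrivial by blast
  then have "count pos_part a > 0 \<or> count neg_part a > 0"
    by (auto simp: count_pos_part count_neg_part)
  then show ?thesis
    using size_neg_part by (metis count_empty less_irrefl neq0_conv size_eq_0_iff_empty)
qed

lemma sum_mset_pos_part: "sum_mset pos_part = sum_mset neg_part"
proof -
  have nat_parts: "real (nat z) - real (nat (- z)) = real_of_int z" for z
    by (cases "z \<ge> 0") auto
  have "sum_mset pos_part - sum_mset neg_part = (\<Sum>a\<in>B. of_int (lam a) *\<^sub>R a)"
    unfolding sum_mset_eq_sum_count[OF finite_B set_mset_pos_part]
      sum_mset_eq_sum_count[OF finite_B set_mset_neg_part]
    by (simp add: count_pos_part count_neg_part nat_parts sum_subtractf[symmetric]
        scaleR_diff_left[symmetric])
  then show ?thesis
    using relation by (simp add: affine_relation_def)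
qed

(* Trading pos_part for neg_part keeps size and sum and lowers the number of elements with
   positive coefficient. *)
lemma exists_multiset_avoiding_pos_part:
  assumes "M \<in> multisets_of_size B h"
  shows "\<exists>N\<in>multisets_of_size B h. \<not> pos_part \<subseteq># N \<and> sum_mset N = sum_mset M"
  using assms
proof (induction "size {#a \<in># M. 0 < lam a#}" arbitrary: M rule: less_induct)
  case less
  show ?case
  proof (cases "pos_part \<subseteq># M")
    case True
    then obtain C where M: "M = pos_part + C"
      by (auto simp: subset_mset.le_iff_add)
    have filter_neg: "{#a \<in># neg_part. 0 < lam a#} = {#}"
      and filter_pos: "{#a \<in># pos_part. 0 < lam a#} = pos_part"
      by (auto simp: filter_mset_eq_conv count_pos_part count_neg_part
          simp flip: count_greater_zero_iff split: if_splits)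
    have "size {#a \<in># neg_part + C. 0 < lam a#} < size {#a \<in># M. 0 < lam a#}"
      unfolding M filter_union_mset filter_neg filter_pos using size_pos_part_pos by simp
    moreover have "neg_part + C \<in> multisets_of_size B h"
      using less.prems M set_mset_neg_part size_neg_part by (auto simp: multisets_of_size_def)
    moreover have "sum_mset (neg_part + C) = sum_mset M"
      using M sum_mset_pos_part by simp
    ultimately show ?thesis
      using less.hyps by metis
  qed (use less.prems in blast)
qed

lemma pos_part_subseteq_if_multiple:
  assumes "k > 0" and "\<And>a. a \<in> B \<Longrightarrow> int (count M a) = int (count N a) + k * lam a"
  shows "pos_part \<subseteq># M"
proof (rule mset_subset_eqI)
  fix a
  show "count pos_part a \<le> count M a"
  proof (cases "a \<in> B \<and> lam a > 0")
    case True
    then have "lam a \<le> k * lam a"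
      using assms(1) by simp
    then have "lam a \<le> int (count M a)"
      using assms(2)[of a] True by linarith
    then show ?thesis
      using True by (simp add: count_pos_part nat_le_iff)
  qed (auto simp: count_pos_part)
qed

(* Multisets with equal sums differ by k * lam, and k > 0 or k < 0 would put pos_part into one
   of them. *)
lemma inj_on_sum_mset_avoiding_pos_part:
  "inj_on sum_mset {M \<in> multisets_of_size B h. \<not> pos_part \<subseteq># M}"
proof (rule inj_onI, clarify)
  fix M N
  assume M: "M \<in> multisets_of_size B h" "\<not> pos_part \<subseteq># M"
    and N: "N \<in> multisets_of_size B h" "\<not> pos_part \<subseteq># N"
    and eq: "sum_mset M = sum_mset N"
  have "affine_relation B (\<lambda>a. of_int (int (count M a) - int (count N a)))"
    using affine_relation_count_diff[OF finite_B M(1) N(1) eq] by simp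
  from integer_relations[OF this]
  obtain k where k: "\<And>a. a \<in> B \<Longrightarrow> int (count M a) - int (count N a) = k * lam a"
    by blast
  have "k = 0"
  proof (rule ccontr)
    assume "k \<noteq> 0"
    then consider "k > 0" | "- k > 0" by linarith
    then show False
    proof cases
      case 1
      then have "pos_part \<subseteq># M"
        using k by (intro pos_part_subseteq_if_multiple[where k = k and N = N])
          (auto simp: algebra_simps)
      with M(2) show False ..
    next
      case 2
      then have "pos_part \<subseteq># N"
        using k by (intro pos_part_subseteq_if_multiple[where k = "- k" and N = M])
          (auto simp: algebra_simps)
      with N(2) show False ..
    qed
  qed
  have "set_mset M \<subseteq> B" "set_mset N \<subseteq> B"
    using M N by (auto simp: multisets_of_size_def)
  then show "M = N"
    using k \<open>k = 0\<close> by (metis multiset_eqI count_eq_zero_iff subsetD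
          diff_eq_eq add_0 of_nat_eq_iff mult_zero_left)
qed

lemma card_multisets_containing_pos_part:
  "card {M \<in> multisets_of_size B h. pos_part \<subseteq># M}
     = (if size pos_part \<le> h then card (multisets_of_size B (h - size pos_part)) else 0)"
proof (cases "size pos_part \<le> h")
  case True
  have "{M \<in> multisets_of_size B h. pos_part \<subseteq># M}
      = (+) pos_part ` multisets_of_size B (h - size pos_part)"
    using True set_mset_pos_part
    by (auto simp: multisets_of_size_def subset_mset.le_iff_add image_iff)
  then show ?thesis
    using True by (simp add: card_image)
next
  case False
  then have empty: "{M \<in> multisets_of_size B h. pos_part \<subseteq># M} = {}"
    by (auto simp: multisets_of_size_def dest: size_mset_mono)
  show ?thesis
    unfolding empty using False by simp
qed

lemma size_pos_part_eq_sum_negative: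
  "real (size pos_part) = (\<Sum>a\<in>{a\<in>B. lam a < 0}. \<bar>of_int (lam a)\<bar>)"
proof -
  have "size neg_part = (\<Sum>a\<in>{a\<in>B. lam a < 0}. nat (- lam a))"
    unfolding neg_part_def size_multiset_sum size_replicate_mset
    using finite_B by (intro sum.mono_neutral_right) auto
  then show ?thesis
    by (simp add: size_neg_part)
qed

lemma exists_negative: "\<exists>a\<in>B. lam a < 0"
proof (rule ccontr)
  assume "\<not> ?thesis"
  then have "{a\<in>B. lam a < 0} = {}" by auto
  then show False
    using size_pos_part_pos size_pos_part_eq_sum_negative by (simp only: sum.empty)
qed

theorem card_sumset:
  "card (sumset h B) = card (multisets_of_size B h)
     - (if size pos_part \<le> h then card (multisets_of_size B (h - size pos_part)) else 0)"
proof -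
  let ?T = "{M \<in> multisets_of_size B h. \<not> pos_part \<subseteq># M}"
  have "sumset h B = sum_mset ` ?T"
  proof
    show "sum_mset ` ?T \<subseteq> sumset h B"
      by (auto simp: sumset_eq_image_sum_mset)
    show "sumset h B \<subseteq> sum_mset ` ?T"
    proof
      fix z assume "z \<in> sumset h B"
      then obtain M where "M \<in> multisets_of_size B h" "z = sum_mset M"
        by (auto simp: sumset_eq_image_sum_mset)
      then show "z \<in> sum_mset ` ?T"
        using exists_multiset_avoiding_pos_part
        by (metis (mono_tags, lifting) image_eqI mem_Collect_eq)
    qed
  qed
  then have "card (sumset h B) = card ?T"
    by (simp add: card_image inj_on_sum_mset_avoiding_pos_part)
  also have "?T = multisets_of_size B h - {M \<in> multisets_of_size B h. pos_part \<subseteq># M}"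
    by blast
  also have "card \<dots> = card (multisets_of_size B h)
      - card {M \<in> multisets_of_size B h. pos_part \<subseteq># M}"
    using finite_multisets_of_size[OF finite_B] by (intro card_Diff_subset) auto
  finally show ?thesis
    by (simp add: card_multisets_containing_pos_part)
qed

end

section \<open>Triangulating the convex hull of a circuit\<close>

lemma mem_convex_hull_subset_iff:
  fixes B :: "'a::real_vector set"
  assumes "finite B" "S \<subseteq> B"
  shows "y \<in> convex hull S \<longleftrightarrow>
    (\<exists>t. (\<forall>x\<in>B. 0 \<le> t x) \<and> (\<forall>x\<in>B - S. t x = 0) \<and> sum t B = 1 \<and> (\<Sum>x\<in>B. t x *\<^sub>R x) = y)"
proof -
  have fin: "finite S" using assms finite_subset by blast
  have restrict: "sum f B = sum f S" if "\<forall>x\<in>B - S. f x = 0" for f :: "'a \<Rightarrow> 'b::comm_monoid_add"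
    using that assms by (intro sum.mono_neutral_right) auto
  show ?thesis
    unfolding convex_hull_finite[OF fin]
  proof safe
    fix u :: "'a \<Rightarrow> real" assume u: "\<forall>x\<in>S. 0 \<le> u x" "sum u S = 1"
    let ?t = "\<lambda>x. if x \<in> S then u x else 0"
    have "sum ?t B = 1" "(\<Sum>x\<in>B. ?t x *\<^sub>R x) = (\<Sum>x\<in>S. u x *\<^sub>R x)"
      using u by (simp_all add: restrict)
    then show "\<exists>t. (\<forall>x\<in>B. 0 \<le> t x) \<and> (\<forall>x\<in>B - S. t x = 0) \<and> sum t B = 1
        \<and> (\<Sum>x\<in>B. t x *\<^sub>R x) = (\<Sum>x\<in>S. u x *\<^sub>R x)"
      using u by (intro exI[of _ ?t]) auto
  next
    fix t :: "'a \<Rightarrow> real" assume t: "\<forall>x\<in>B. 0 \<le> t x" "\<forall>x\<in>B - S. t x = 0" "sum t B = 1"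
    then show "\<exists>u. (\<forall>x\<in>S. 0 \<le> u x) \<and> sum u S = 1 \<and> (\<Sum>x\<in>S. u x *\<^sub>R x) = (\<Sum>x\<in>B. t x *\<^sub>R x)"
      using assms(2) by (intro exI[of _ t]) (auto simp: restrict)
  qed
qed

(* Move the weights of y along the relation r until the first weight on {r < 0} vanishes. *)
lemma convex_hull_eq_Union_facets:
  fixes B :: "'a::real_vector set" and r :: "'a \<Rightarrow> real"
  assumes B: "finite B" and r: "affine_relation B r" and neg: "\<exists>a\<in>B. r a < 0"
  shows "convex hull B = (\<Union>a\<in>{a\<in>B. r a < 0}. convex hull (B - {a}))"
proof
  show "(\<Union>a\<in>{a\<in>B. r a < 0}. convex hull (B - {a})) \<subseteq> convex hull B"
    by (auto intro: hull_mono[THEN subsetD, of "B - {_}" B])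
  show "convex hull B \<subseteq> (\<Union>a\<in>{a\<in>B. r a < 0}. convex hull (B - {a}))"
  proof
    fix y assume "y \<in> convex hull B"
    then obtain t where t0: "\<forall>x\<in>B. 0 \<le> t x" and t1: "sum t B = 1" and ty: "(\<Sum>x\<in>B. t x *\<^sub>R x) = y"
      using mem_convex_hull_subset_iff[OF B subset_refl] by auto
    define N where "N = {a\<in>B. r a < 0}"
    define s where "s = Min ((\<lambda>a. t a / - r a) ` N)"
    have N: "finite N" "N \<noteq> {}"
      using B neg by (auto simp: N_def)
    have "s \<in> (\<lambda>a. t a / - r a) ` N"
      unfolding s_def using N by (intro Min_in) auto
    then obtain i where i: "i \<in> N" "s = t i / - r i"
      by blast
    have s_le: "s \<le> t a / - r a" if "a \<in> N" for a
      using N that by (auto simp: s_def)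
    have "s \<ge> 0"
      using i t0 by (auto simp: N_def divide_nonneg_neg)
    define t' where "t' a = t a + s * r a" for a
    have "\<forall>x\<in>B. 0 \<le> t' x"
    proof
      fix a assume "a \<in> B"
      show "0 \<le> t' a"
      proof (cases "r a < 0")
        case True
        then have "s * - r a \<le> t a"
          using s_le[of a] \<open>a \<in> B\<close> by (simp add: N_def field_simps)
        then show ?thesis by (simp add: t'_def)
      next
        case False
        then show ?thesis using \<open>s \<ge> 0\<close> t0 \<open>a \<in> B\<close> by (simp add: t'_def)
      qed
    qed
    moreover have "t' i = 0"
      using i by (simp add: t'_def N_def)
    moreover have "sum t' B = 1" "(\<Sum>x\<in>B. t' x *\<^sub>R x) = y"
      using r t1 ty
      by (simp_all add: t'_def affine_relation_def sum.distrib scaleR_add_left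
          flip: sum_distrib_left scaleR_scaleR scaleR_sum_right)
    ultimately have "y \<in> convex hull (B - {i})"
      using mem_convex_hull_subset_iff[of B "B - {i}" y] B by auto
    then show "y \<in> (\<Union>a\<in>{a\<in>B. r a < 0}. convex hull (B - {a}))"
      using i by (auto simp: N_def)
  qed
qed

(* Two weight vectors of y differ by a multiple s r of the relation; the signs at i and k
   force s = 0. *)
lemma convex_hull_facets_inter:
  fixes B :: "'a::real_vector set" and r :: "'a \<Rightarrow> real"
  assumes B: "finite B"
    and one_dim: "\<And>q. affine_relation B q \<Longrightarrow> \<exists>s. \<forall>a\<in>B. q a = s * r a"
    and ik: "i \<in> B" "k \<in> B" "r i < 0" "r k < 0" "i \<noteq> k"
  shows "convex hull (B - {i}) \<inter> convex hull (B - {k}) \<subseteq> convex hull (B - {i, k})"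
proof
  fix y assume "y \<in> convex hull (B - {i}) \<inter> convex hull (B - {k})"
  then obtain t u where
    t: "\<forall>x\<in>B. 0 \<le> t x" "t i = 0" "sum t B = 1" "(\<Sum>x\<in>B. t x *\<^sub>R x) = y" and
    u: "\<forall>x\<in>B. 0 \<le> u x" "u k = 0" "sum u B = 1" "(\<Sum>x\<in>B. u x *\<^sub>R x) = y"
    using mem_convex_hull_subset_iff[OF B, of "B - {i}" y]
          mem_convex_hull_subset_iff[OF B, of "B - {k}" y] ik
    by auto
  have "affine_relation B (\<lambda>a. u a - t a)"
    using t u by (simp add: affine_relation_def sum_subtractf scaleR_diff_left)
  then obtain s where s: "\<forall>a\<in>B. u a - t a = s * r a"
    using one_dim by blast
  have "0 \<le> s * r i" "s * r k \<le> 0"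
    using s t u ik by (metis diff_zero, metis diff_0 neg_le_0_iff_le)
  then have "s = 0"
    using ik by (auto simp: zero_le_mult_iff mult_le_0_iff)
  then have "t k = 0"
    using s u ik by auto
  then show "y \<in> convex hull (B - {i, k})"
    using mem_convex_hull_subset_iff[OF B, of "B - {i, k}" y] t by auto
qed

lemma negligible_convex_hull_card_le:
  fixes S :: "'a::euclidean_space set"
  assumes "finite S" "card S \<le> DIM('a)"
  shows "negligible (convex hull S)"
proof -
  have "aff_dim (convex hull S) < DIM('a)"
    using aff_dim_le_card[OF assms(1)] assms(2) by (simp add: aff_dim_convex_hull)
  then have "interior (convex hull S) = {}"
    using aff_dim_nonempty_interior by fastforce
  then show ?thesis
    using negligible_convex_interior[OF convex_convex_hull, of S] by simp
qed

lemma measure_convex_hull_eq_sum_facets: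
  fixes B :: "'a::euclidean_space set" and r :: "'a \<Rightarrow> real"
  assumes B: "finite B" "card B = DIM('a) + 2"
    and r: "affine_relation B r" "\<exists>a\<in>B. r a < 0"
    and one_dim: "\<And>q. affine_relation B q \<Longrightarrow> \<exists>s. \<forall>a\<in>B. q a = s * r a"
  shows "measure lebesgue (convex hull B)
      = (\<Sum>a\<in>{a\<in>B. r a < 0}. measure lebesgue (convex hull (B - {a})))"
proof -
  have "pairwise (\<lambda>i k. negligible (convex hull (B - {i}) \<inter> convex hull (B - {k}))) {a\<in>B. r a < 0}"
  proof (rule pairwiseI, clarify)
    fix i k assume ik: "i \<in> B" "r i < 0" "k \<in> B" "r k < 0" "i \<noteq> k"
    then have "card (B - {i, k}) = DIM('a)"
      using B by (simp add: card_Diff_subset)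
    then have "negligible (convex hull (B - {i, k}))"
      using B by (intro negligible_convex_hull_card_le) auto
    then show "negligible (convex hull (B - {i}) \<inter> convex hull (B - {k}))"
      using convex_hull_facets_inter[OF B(1) one_dim] ik negligible_subset by metis
  qed
  moreover have "convex hull (B - {a}) \<in> lmeasurable" for a
    using B by (intro lmeasurable_compact finite_imp_compact_convex_hull) simp
  ultimately show ?thesis
    unfolding convex_hull_eq_Union_facets[OF B(1) r]
    by (intro measure_negligible_finite_Union_image) (auto simp: B)
qed

section \<open>Subgroups generated by difference sets\<close>

lemma add_subgroup_gen_induct [consumes 1, case_names base zero diff]:
  assumes "x \<in> add_subgroup_gen S"
    and "\<And>x. x \<in> S \<Longrightarrow> P x" "P 0" "\<And>x y. P x \<Longrightarrow> P y \<Longrightarrow> P (x - y)"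
  shows "P x"
proof -
  have "{x. P x} \<in> {G. S \<subseteq> G \<and> 0 \<in> G \<and> (\<forall>x\<in>G. \<forall>y\<in>G. x - y \<in> G)}"
    using assms(2-4) by auto
  then have "add_subgroup_gen S \<subseteq> {x. P x}"
    unfolding add_subgroup_gen_def by (rule Inter_lower)
  with assms(1) show ?thesis by blast
qed

lemma add_subgroup_gen_base: "x \<in> S \<Longrightarrow> x \<in> add_subgroup_gen S"
  and add_subgroup_gen_zero: "0 \<in> add_subgroup_gen S"
  and add_subgroup_gen_diff: "x \<in> add_subgroup_gen S
      \<Longrightarrow> y \<in> add_subgroup_gen S \<Longrightarrow> x - y \<in> add_subgroup_gen S"
  by (auto simp: add_subgroup_gen_def)

lemma add_subgroup_gen_subset_span: "add_subgroup_gen S \<subseteq> span S"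
  by (auto elim: add_subgroup_gen_induct intro: span_base span_zero span_diff)

lemma image_add_subgroup_gen_subset:
  assumes "\<And>x y. f (x - y) = f x - f y"
  shows "f ` add_subgroup_gen S \<subseteq> add_subgroup_gen (f ` S)"
proof -
  have "f 0 = 0"
    using assms[of 0 0] by simp
  have "f x \<in> add_subgroup_gen (f ` S)" if "x \<in> add_subgroup_gen S" for x
    using that
    by (induction rule: add_subgroup_gen_induct)
       (auto simp: assms \<open>f 0 = 0\<close>
               intro: add_subgroup_gen_base add_subgroup_gen_zero add_subgroup_gen_diff)
  then show ?thesis by blast
qed

lemma diffset_image:
  assumes "\<And>x y. f (x - y) = f x - f y"
  shows "diffset (f ` A) = f ` diffset A"
proof -
  have "diffset (f ` A) = {f (x - y) |x y. x \<in> A \<and> y \<in> A}"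
    by (auto simp: diffset_def assms)
  then show ?thesis
    by (auto simp: diffset_def)
qed

lemma add_subgroup_gen_diffset_combination:
  fixes B :: "'a::real_vector set"
  assumes "finite B" "v \<in> add_subgroup_gen (diffset B)"
  shows "\<exists>k::'a \<Rightarrow> int. sum k B = 0 \<and> (\<Sum>a\<in>B. of_int (k a) *\<^sub>R a) = v"
  using assms(2)
proof (induction rule: add_subgroup_gen_induct)
  case (base v)
  then obtain a a' where v: "v = a - a'" "a \<in> B" "a' \<in> B"
    by (auto simp: diffset_def)
  define k :: "'a \<Rightarrow> int" where "k x = (if x = a then 1 else 0) - (if x = a' then 1 else 0)" for x
  have "sum k B = 0"
    using v assms(1) by (simp add: k_def sum_subtractf)
  moreover have "(\<Sum>x\<in>B. of_int (k x) *\<^sub>R x)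
      = (\<Sum>x\<in>B. if x = a then x else 0) - (\<Sum>x\<in>B. if x = a' then x else 0)"
    unfolding sum_subtractf[symmetric] by (rule sum.cong) (auto simp: k_def)
  ultimately have "sum k B = 0" "(\<Sum>x\<in>B. of_int (k x) *\<^sub>R x) = v"
    using v assms(1) by simp_all
  then show ?case by blast
next
  case zero
  show ?case by (intro exI[of _ "\<lambda>_. 0"]) simp
next
  case (diff v w)
  then obtain k l where "sum k B = 0" "(\<Sum>a\<in>B. of_int (k a) *\<^sub>R a) = v"
    "sum l B = 0" "(\<Sum>a\<in>B. of_int (l a) *\<^sub>R a) = w"
    by blast
  then show ?case
    by (intro exI[of _ "\<lambda>a. k a - l a"]) (simp add: sum_subtractf scaleR_diff_left)
qed

section \<open>A full-dimensional simplex and one more point\<close>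

locale simplex_and_point =
  fixes a0 c :: "real^'n::finite" and b :: "'n \<Rightarrow> real^'n"
  assumes det_edges: "det (\<chi> i j. b j $ i - a0 $ i) \<noteq> 0"
    and c_notin: "c \<notin> insert a0 (range b)"
begin

definition points :: "(real^'n) set" where
  "points = insert a0 (insert c (range b))"

definition W :: "real^'n^'n" where
  "W = (\<chi> i j. b j $ i - a0 $ i)"

definition u :: "real^'n" where
  "u = c - a0"

definition D :: real where
  "D = det W"

definition D_repl :: "'n \<Rightarrow> real" where
  "D_repl k = det (\<chi> i j. if j = k then u $ i else W $ i $ j)"

(* By Cramer's rule D_repl k = D x_k where W x = u, hence
   (D - sum_k D_repl k) a0 - D c + sum_k D_repl k (b k) = 0: the coefficients of the affine
   relation of the points are their maximal minors. *)
definition coeff :: "real^'n \<Rightarrow> real" where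
  "coeff a = (if a = a0 then D - sum D_repl UNIV else if a = c then - D else D_repl (inv b a))"

lemma D_nonzero: "D \<noteq> 0"
  using det_edges by (simp add: D_def W_def)

lemma inj_b: "inj b"
proof (rule injI, rule ccontr)
  fix j k assume "b j = b k" "j \<noteq> k"
  then have "column j W = column k W"
    by (simp add: W_def column_def)
  then show False
    using det_identical_columns[OF \<open>j \<noteq> k\<close>, of W] D_nonzero by (simp add: D_def)
qed

lemma a0_notin: "a0 \<notin> range b"
proof
  assume "a0 \<in> range b"
  then obtain j where "b j = a0" by auto
  then have "column j W = 0"
    by (simp add: W_def column_def vec_eq_iff)
  then show False
    using det_zero_column(1)[of j W] D_nonzero by (simp add: D_def)
qed

lemma c_ne_a0: "c \<noteq> a0" and c_notin_b: "c \<notin> range b"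
  using c_notin by auto

lemma finite_points: "finite points"
  by (simp add: points_def)

lemma sum_points: "sum f points = f a0 + f c + (\<Sum>j\<in>UNIV. f (b j))"
  using a0_notin c_ne_a0 c_notin_b by (simp add: points_def sum.reindex inj_b add.assoc)

lemma W_mult: "W *v y = (\<Sum>j\<in>UNIV. y $ j *\<^sub>R (b j - a0))"
  by (simp add: matrix_mult_sum W_def column_def scalar_mult_eq_scaleR vec_eq_iff)

lemma W_invertible: "invertible W"
  using D_nonzero by (simp add: D_def invertible_det_nz)

lemma W_solvable: obtains x where "W *v x = y"
proof -
  obtain W' where "W ** W' = mat 1"
    using W_invertible by (auto simp: invertible_def)
  then have "W *v (W' *v y) = y"
    by (simp add: matrix_vector_mul_assoc)
  then show ?thesis by (rule that)
qed

lemma W_eq_0: "W *v y = 0 \<Longrightarrow> y = 0"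
  by (metis W_invertible invertible_def matrix_vector_mul_assoc
      matrix_vector_mul_lid matrix_vector_mult_0_right)

lemma combination_points:
  "(\<Sum>a\<in>points. r a *\<^sub>R a) = sum r points *\<^sub>R a0 + r c *\<^sub>R u + W *v (\<chi> j. r (b j))"
proof -
  have "(\<Sum>a\<in>points. r a *\<^sub>R a)
      = (r a0 + r c + (\<Sum>j\<in>UNIV. r (b j))) *\<^sub>R a0 + r c *\<^sub>R (c - a0)
        + (\<Sum>j\<in>UNIV. r (b j) *\<^sub>R (b j - a0))"
    by (simp add: sum_points algebra_simps sum.distrib scaleR_sum_left sum_subtractf)
  then show ?thesis
    by (simp add: sum_points W_mult u_def)
qed

lemma coeff_a0: "coeff a0 = D - sum D_repl UNIV"
  and coeff_c: "coeff c = - D"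
  and coeff_b: "coeff (b j) = D_repl j"
  using c_ne_a0 a0_notin c_notin_b by (auto simp: coeff_def inv_f_f[OF inj_b])

lemma D_repl_cramer:
  assumes "W *v x = u"
  shows "D_repl k = x $ k * D"
  using cramer_lemma[where A = W and x = x and k = k] unfolding assms
      by (simp add: D_repl_def D_def)

lemma affine_relation_coeff: "affine_relation points coeff"
proof -
  obtain x where x: "W *v x = u"
    using W_solvable .
  have "(\<chi> j. coeff (b j)) = D *\<^sub>R x"
    using D_repl_cramer[OF x] by (simp add: coeff_b vec_eq_iff)
  then have "W *v (\<chi> j. coeff (b j)) = D *\<^sub>R u"
    by (simp add: x matrix_vector_mult_scaleR)
  moreover have "sum coeff points = 0"
    by (simp add: sum_points coeff_a0 coeff_c coeff_b)
  ultimately show ?thesis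
    by (simp add: affine_relation_def combination_points coeff_c)
qed

lemma affine_relation_eq_multiple_coeff:
  assumes "affine_relation points r"
  shows "\<forall>a\<in>points. r a = (- r c / D) * coeff a"
proof -
  define s where "s = - r c / D"
  define r' where "r' a = r a - s * coeff a" for a
  have "affine_relation points r'"
    using assms affine_relation_coeff
    by (simp add: affine_relation_def r'_def sum_subtractf scaleR_diff_left
        flip: sum_distrib_left scaleR_scaleR scaleR_sum_right)
  moreover have "r' c = 0"
    using D_nonzero by (simp add: r'_def s_def coeff_c)
  ultimately have "W *v (\<chi> j. r' (b j)) = 0"
    by (clarsimp simp: affine_relation_def combination_points)
  then have "(\<chi> j. r' (b j)) = 0"
    by (rule W_eq_0)
  then have "r' (b j) = 0" for j
    by (simp add: vec_eq_iff)
  moreover have "r' a0 = 0"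
    using \<open>affine_relation points r'\<close> \<open>r' c = 0\<close> calculation
        by (simp add: affine_relation_def sum_points)
  ultimately have "\<forall>a\<in>points. r' a = 0"
    using \<open>r' c = 0\<close> by (auto simp: points_def)
  then show ?thesis
    unfolding s_def[symmetric] by (simp add: r'_def)
qed

lemma measure_facet:
  assumes "a \<in> points"
  shows "measure lebesgue (convex hull (points - {a})) = \<bar>coeff a\<bar> / fact CARD('n)"
proof -
  consider "a = a0" | "a = c" | k where "a = b k"
    using assms by (auto simp: points_def)
  then show ?thesis
  proof cases
    case 1
    \<comment> \<open>seen from c, the edges are b j - c = (b j - a0) - u: a rank-one update of W\<close>
    have "points - {a} = insert c (range b)"
      using 1 a0_notin c_ne_a0 by (auto simp: points_def)
    moreover have "(\<chi> i j. b j $ i - c $ i) = (\<chi> i j. W $ i $ j + (- 1) * u $ i)"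
      by (simp add: W_def u_def vec_eq_iff)
    ultimately show ?thesis
      using measure_simplex_cart[OF inj_b c_notin_b] det_add_rank_one_columns[of W "\<lambda>_. - 1" u] 1
      by (simp add: coeff_a0 D_def D_repl_def sum_negf)
  next
    case 2
    have "points - {a} = insert a0 (range b)"
      using 2 c_ne_a0 c_notin_b by (auto simp: points_def)
    then show ?thesis
      using measure_simplex_cart[OF inj_b a0_notin] 2 by (simp add: coeff_c D_def W_def)
  next
    case 3
    have "range (b(k := c)) = insert c (range b - {b k})"
      using inj_b by (auto simp: inj_eq image_iff)
    then have "points - {a} = insert a0 (range (b(k := c)))"
      using 3 a0_notin c_ne_a0 c_notin_b by (auto simp: points_def)
    moreover have "inj (b(k := c))"
      using inj_b c_notin_b by (auto simp: inj_def)
    moreover have "a0 \<notin> range (b(k := c))"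
      using a0_notin c_ne_a0 by auto
    moreover have "(\<chi> i j. (b(k := c)) j $ i - a0 $ i)
        = (\<chi> i j. if j = k then u $ i else W $ i $ j)"
      by (simp add: W_def u_def vec_eq_iff)
    ultimately show ?thesis
      using measure_simplex_cart[of "b(k := c)" a0] 3 by (simp add: coeff_b D_repl_def)
  qed
qed

end

locale lattice_simplex_and_point = simplex_and_point a0 c b
  for a0 c :: "real^'n::finite" and b :: "'n \<Rightarrow> real^'n" +
  assumes integral: "\<And>a i. a \<in> points \<Longrightarrow> a $ i \<in> \<int>"
    and generating: "\<And>i. axis i 1 \<in> add_subgroup_gen (diffset points)"
begin

lemma coeff_Ints: "coeff a \<in> \<int>"
proof -
  have "W $ i $ j \<in> \<int>" "u $ i \<in> \<int>" for i j
    using integral by (auto simp: W_def u_def points_def)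
  then have "D \<in> \<int>" "D_repl k \<in> \<int>" for k
    unfolding D_def D_repl_def by (auto intro!: det_Ints)
  then show ?thesis
    by (auto simp: coeff_def intro!: Ints_diff Ints_sum Ints_minus)
qed

lemma inverse_integral_plus_rank_one:
  fixes x :: "real^'n"
  assumes x: "W *v x = u"
  obtains Z :: "real^'n^'n" and t :: "'n \<Rightarrow> real"
  where "\<And>p q. Z $ p $ q \<in> \<int>" "\<And>q. t q \<in> \<int>" "W ** (\<chi> p q. Z $ p $ q + t q * x $ p) = mat 1"
proof -
  have "\<forall>q. \<exists>k::real^'n \<Rightarrow> int. sum k points = 0 \<and> (\<Sum>a\<in>points. of_int (k a) *\<^sub>R a) = axis q 1"
    using add_subgroup_gen_diffset_combination[OF finite_points generating] by blast
  then obtain k :: "'n \<Rightarrow> real^'n \<Rightarrow> int"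
    where k: "\<And>q. sum (k q) points = 0" "\<And>q. (\<Sum>a\<in>points. of_int (k q a) *\<^sub>R a) = axis q 1"
    by (metis choice)
  define Z where "Z = (\<chi> p q. real_of_int (k q (b p)))"
  define t where "t q = real_of_int (k q c)" for q
  have "W *v column q (\<chi> p q. Z $ p $ q + t q * x $ p) = axis q 1" for q
  proof -
    have "column q (\<chi> p q. Z $ p $ q + t q * x $ p) = t q *\<^sub>R x + (\<chi> j. real_of_int (k q (b j)))"
      by (simp add: column_def Z_def vec_eq_iff)
    then show ?thesis
      using combination_points[of "\<lambda>a. real_of_int (k q a)"] k[of q]
      by (simp add: matrix_vector_right_distrib matrix_vector_mult_scaleR x t_def flip: of_int_sum)
  qed
  then have "W ** (\<chi> p q. Z $ p $ q + t q * x $ p) = mat 1"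
    by (simp add: vec_eq_iff matrix_matrix_mult_def matrix_vector_mult_def column_def
        mat_def axis_def)
  then show ?thesis
    using that[of Z t] by (simp add: Z_def t_def)
qed

(* 1 / D = det (Z + x t^T), and r c clears the denominators of x; as the rank-one expansion of
   the determinant is linear in x, (r c) / D is an integer. *)
lemma integer_relation_c_div_D_Ints:
  assumes r: "affine_relation points (\<lambda>a. of_int (r a))"
  shows "of_int (r c) / D \<in> \<int>"
proof (cases "r c = 0")
  case False
  define rc where "rc = real_of_int (r c)"
  have rc: "rc \<noteq> 0" using False by (simp add: rc_def)
  obtain x where x: "W *v x = u"
    using W_solvable .
  have "rc *\<^sub>R u + W *v (\<chi> j. of_int (r (b j))) = 0"
    using r by (clarsimp simp: affine_relation_def combination_points rc_def)
  then have "W *v (rc *\<^sub>R x + (\<chi> j. of_int (r (b j)))) = 0"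
    by (simp add: matrix_vector_right_distrib matrix_vector_mult_scaleR x)
  then have "rc *\<^sub>R x = - (\<chi> j. of_int (r (b j)))"
    using W_eq_0 by (simp add: eq_neg_iff_add_eq_0)
  then have rcx: "(rc *\<^sub>R x) $ p \<in> \<int>" for p
    by simp
  obtain Z t where Z: "\<And>p q. Z $ p $ q \<in> \<int>" and t: "\<And>q. t q \<in> \<int>"
    and Y: "W ** (\<chi> p q. Z $ p $ q + t q * x $ p) = mat 1"
    using inverse_integral_plus_rank_one[OF x] by blast
  define Y where "Y = (\<chi> p q. Z $ p $ q + t q * x $ p)"
  define d where "d q = det (\<chi> p l. if l = q then (rc *\<^sub>R x) $ p else Z $ p $ l)" for q
  have "D * det Y = 1"
    using arg_cong[OF Y, of det] by (simp add: Y_def D_def det_mul)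
  have "det Y = det Z + (\<Sum>q\<in>UNIV. (t q / rc) * d q)"
  proof -
    have "Y = (\<chi> p q. Z $ p $ q + (t q / rc) * (rc *\<^sub>R x) $ p)"
      using rc by (simp add: Y_def vec_eq_iff)
    then show ?thesis
      unfolding d_def by (simp only: det_add_rank_one_columns)
  qed
  then have "rc * det Y = rc * det Z + (\<Sum>q\<in>UNIV. t q * d q)"
    using rc by (simp add: distrib_left sum_distrib_left)
  moreover have "rc * det Z + (\<Sum>q\<in>UNIV. t q * d q) \<in> \<int>"
    using Z t rcx unfolding d_def rc_def by (intro Ints_add Ints_mult Ints_sum det_Ints) auto
  moreover have "rc / D = rc * det Y"
    using \<open>D * det Y = 1\<close> D_nonzero by (simp add: field_simps)
  ultimately show ?thesis
    by (simp add: rc_def)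
qed simp

lemma primitive_affine_relation_coeff:
  obtains lam :: "real^'n \<Rightarrow> int"
  where "primitive_affine_relation points lam"
    and "\<And>r. affine_relation points r \<Longrightarrow> \<exists>s. \<forall>a\<in>points. r a = s * of_int (lam a)"
    and "\<And>a. a \<in> points \<Longrightarrow>
            measure lebesgue (convex hull (points - {a})) * fact CARD('n) = \<bar>of_int (lam a)\<bar>"
proof -
  define lam where "lam a = \<lfloor>coeff a\<rfloor>" for a
  have lam: "coeff a = of_int (lam a)" for a
    using coeff_Ints[of a] by (auto simp: lam_def elim: Ints_cases)
  have "primitive_affine_relation points lam"
  proof
    show "finite points" by (rule finite_points)
    show "affine_relation points (\<lambda>a. of_int (lam a))"
      using affine_relation_coeff by (simp flip: lam)
    show "\<exists>a\<in>points. lam a \<noteq> 0"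
      using coeff_c D_nonzero lam[of c] by (intro bexI[of _ c]) (auto simp: points_def)
  next
    fix r assume r: "affine_relation points (\<lambda>a. of_int (r a))"
    obtain k where k: "of_int (r c) / D = of_int k"
      using integer_relation_c_div_D_Ints[OF r] by (auto elim: Ints_cases)
    have "real_of_int (r a) = of_int (- k * lam a)" if "a \<in> points" for a
      using affine_relation_eq_multiple_coeff[OF r] that k lam[of a] by simp
    then show "\<exists>k. \<forall>a\<in>points. r a = k * lam a"
      by (intro exI[of _ "- k"]) (simp only: of_int_eq_iff, blast)
  qed
  moreover have "\<exists>s. \<forall>a\<in>points. r a = s * of_int (lam a)" if "affine_relation points r" for r
    using affine_relation_eq_multiple_coeff[OF that] unfolding lam by blast
  moreover have "measure lebesgue (convex hull (points - {a})) * fact CARD('n) = \<bar>of_int (lam a)\<bar>"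
    if "a \<in> points" for a
    using measure_facet[OF that] by (simp add: lam)
  ultimately show ?thesis
    using that by blast
qed

end

lemma simplex_edges_exist:
  fixes B :: "(real^'n::finite) set"
  assumes fin: "finite B" and a0: "a0 \<in> B" and span: "span (diffset B) = UNIV"
  obtains b :: "'n \<Rightarrow> real^'n"
  where "range b \<subseteq> B" "inj b" "a0 \<notin> range b" "det (\<chi> i j. b j $ i - a0 $ i) \<noteq> 0"
proof -
  define V where "V = (\<lambda>x. x - a0) ` B"
  have "diffset B \<subseteq> span V"
  proof
    fix v assume "v \<in> diffset B"
    then obtain x y where "v = (x - a0) - (y - a0)" "x \<in> B" "y \<in> B"
      by (auto simp: diffset_def)
    moreover have "x - a0 \<in> span V" "y - a0 \<in> span V"
      using calculation by (auto simp: V_def intro: span_base)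
    ultimately show "v \<in> span V"
      by (simp only: span_diff)
  qed
  then have span_V: "span V = UNIV"
    using span span_minimal[OF _ subspace_span] by blast
  obtain K where K: "K \<subseteq> V" "independent K" "V \<subseteq> span K" "card K = dim V"
    by (rule basis_exists)
  have span_K: "span K = UNIV"
    using K(3) span_V span_minimal[OF _ subspace_span] by blast
  have "finite K" "card K = CARD('n)"
    using K(1,4) fin finite_subset span_V dim_span[of V] by (auto simp: V_def)
  then obtain w where w: "bij_betw w (UNIV :: 'n set) K"
    using finite_same_card_bij[of "UNIV :: 'n set" K] by auto
  define b where "b j = a0 + w j" for j
  have "columns (\<chi> i j. b j $ i - a0 $ i) = K"
    using w by (auto simp: columns_def column_def b_def bij_betw_def vec_eq_iff)
  then have "vec.span (columns (\<chi> i j. b j $ i - a0 $ i)) = UNIV"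
    by (simp add: span_vec_eq span_K)
  then have "invertible (\<chi> i j. b j $ i - a0 $ i)"
    unfolding invertible_right_inverse matrix_right_invertible_span_columns[symmetric] .
  moreover have "0 \<notin> K"
    using K(2) dependent_zero by blast
  moreover have "range b \<subseteq> B" "inj b" "a0 \<notin> range b"
    using K(1) w \<open>0 \<notin> K\<close> by (auto simp: b_def V_def bij_betw_def inj_def)
  ultimately show ?thesis
    using that[of b] by (simp add: invertible_det_nz)
qed

lemma simplex_and_point_exists:
  fixes B :: "(real^'n::finite) set"
  assumes fin: "finite B" and card: "card B = CARD('n) + 2" and span: "span (diffset B) = UNIV"
  obtains a0 c b where "simplex_and_point a0 c b" and "B = insert a0 (insert c (range b))"
proof -
  have "B \<noteq> {}"
    using card by auto
  then obtain a0 where a0: "a0 \<in> B"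
    by blast
  obtain b where b: "range b \<subseteq> B" "inj b" "a0 \<notin> range b"
      and det: "det (\<chi> i j. b j $ i - a0 $ i) \<noteq> 0"
    using simplex_edges_exist[OF fin a0 span] by blast
  have sub: "insert a0 (range b) \<subseteq> B"
    using a0 b(1) by blast
  have "card (insert a0 (range b)) = CARD('n) + 1"
    using b(2,3) by (simp add: card_image)
  then have "card (B - insert a0 (range b)) = 1"
    using card_Diff_subset[OF finite_subset[OF sub fin] sub] card by simp
  then obtain c where c: "B - insert a0 (range b) = {c}"
    by (rule card_1_singletonE)
  have "simplex_and_point a0 c b"
    using det c by unfold_locales auto
  moreover have "B = insert a0 (insert c (range b))"
    using c sub by blast
  ultimately show ?thesis
    by (rule that)
qed

lemma lattice_points_primitive_relation:
  fixes B :: "(real^'n::finite) set"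
  assumes fin: "finite B" and card: "card B = CARD('n) + 2"
    and integral: "\<And>a i. a \<in> B \<Longrightarrow> a $ i \<in> \<int>"
    and generating: "\<And>i. axis i 1 \<in> add_subgroup_gen (diffset B)"
  obtains lam :: "real^'n \<Rightarrow> int"
  where "primitive_affine_relation B lam"
    and "\<And>r. affine_relation B r \<Longrightarrow> \<exists>s. \<forall>a\<in>B. r a = s * of_int (lam a)"
    and "\<And>a. a \<in> B \<Longrightarrow> measure lebesgue (convex hull (B - {a})) * fact CARD('n) = \<bar>of_int (lam a)\<bar>"
proof -
  have "Basis \<subseteq> span (diffset B)"
    using generating add_subgroup_gen_subset_span by (auto simp: Basis_vec_def)
  then have "span (diffset B) = UNIV"
    using span_minimal[OF _ subspace_span, of Basis] by auto
  then obtain a0 c b where sp: "simplex_and_point a0 c b"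
      and B: "B = insert a0 (insert c (range b))"
    using simplex_and_point_exists[OF fin card] by blast
  have points: "simplex_and_point.points a0 c b = B"
    using B by (simp add: simplex_and_point.points_def[OF sp])
  interpret lattice_simplex_and_point a0 c b
    by (rule lattice_simplex_and_point.intro[OF sp], unfold_locales)
        (simp_all add: points integral generating)
  show ?thesis
    using primitive_affine_relation_coeff that unfolding points by blast
qed

lemma card_sumset_lattice_points:
  fixes B :: "(real^'n::finite) set"
  assumes fin: "finite B" and card: "card B = CARD('n) + 2"
    and integral: "\<And>a i. a \<in> B \<Longrightarrow> a $ i \<in> \<int>"
    and generating: "\<And>i. axis i 1 \<in> add_subgroup_gen (diffset B)"
  obtains m :: nat
  where "measure lebesgue (convex hull B) * fact CARD('n) = real m"
    and "\<And>h. card (sumset h B) = ((h + CARD('n) + 1) choose (CARD('n) + 1))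
            - (if m \<le> h then (h - m + CARD('n) + 1) choose (CARD('n) + 1) else 0)"
proof -
  obtain lam where prim: "primitive_affine_relation B lam"
    and one_dim: "\<And>r. affine_relation B r \<Longrightarrow> \<exists>s. \<forall>a\<in>B. r a = s * of_int (lam a)"
    and facet: "\<And>a. a \<in> B \<Longrightarrow> measure lebesgue (convex hull (B - {a})) * fact CARD('n)
            = \<bar>of_int (lam a)\<bar>"
    using lattice_points_primitive_relation[OF assms] by blast
  interpret primitive_affine_relation B lam
    by (rule prim)
  have "measure lebesgue (convex hull B)
      = (\<Sum>a\<in>{a\<in>B. lam a < 0}. measure lebesgue (convex hull (B - {a})))"
    using measure_convex_hull_eq_sum_facets[OF fin, of "\<lambda>a. of_int (lam a)"] card relation
      exists_negative one_dim by simp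
  then have "measure lebesgue (convex hull B) * fact CARD('n) = real (size pos_part)"
    by (simp add: sum_distrib_right facet size_pos_part_eq_sum_negative)
  moreover have "card (multisets_of_size B n) = (n + CARD('n) + 1) choose (CARD('n) + 1)" for n
    using card_multisets_of_size[OF fin, of n] card binomial_symmetric[of n "n + CARD('n) + 1"]
    by (simp add: ac_simps)
  ultimately show ?thesis
    using that[of "size pos_part"] card_sumset by (simp add: Suc_diff_le)
qed

lemma binomial_diff_eq_gbinomial:
  fixes h m d :: nat
  assumes "real m \<le> real h + real d + 1"
  shows "real (((h + d + 1) choose (d + 1)) - (if m \<le> h then (h - m + d + 1) choose (d + 1) else 0))
           = real ((h + d + 1) choose (d + 1)) - ((real h - real m + real d + 1) gchoose (d + 1))"
proof (cases "m \<le> h")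
  case True
  then have "real h - real m + real d + 1 = real (h - m + d + 1)"
    by simp
  then have gb: "(real h - real m + real d + 1) gchoose (d + 1)
      = real ((h - m + d + 1) choose (d + 1))"
    by (simp only: binomial_gbinomial)
  have "(h - m + d + 1) choose (d + 1) \<le> (h + d + 1) choose (d + 1)"
    by (rule binomial_right_mono) simp
  then show ?thesis
    using True by (simp only: gb if_True of_nat_diff)
next
  case False
  then have "real h - real m + real d + 1 = real (h + d + 1 - m)"
    using assms by simp
  moreover have "(h + d + 1 - m) choose (d + 1) = 0"
    using False by simp
  ultimately have "(real h - real m + real d + 1) gchoose (d + 1) = 0"
    by (metis binomial_gbinomial of_nat_0)
  then show ?thesis
    using False by simp
qed

lemma lat_to_real_diff: "lat_to_real (x - y) = lat_to_real x - lat_to_real y"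
  and lat_to_real_add: "lat_to_real (x + y) = lat_to_real x + lat_to_real y"
  and lat_to_real_0: "lat_to_real 0 = 0"
  and lat_to_real_axis: "lat_to_real (axis i 1) = axis i 1"
  by (simp_all add: lat_to_real_def vec_eq_iff axis_def)

lemma inj_lat_to_real: "inj lat_to_real"
  by (auto intro!: injI simp: lat_to_real_def vec_eq_iff)

lemma card_sumset_int_lattice:
  fixes A :: "(int^'d::finite) set"
  assumes finA: "finite A" and cardA: "card A = CARD('d) + 2"
    and gen: "add_subgroup_gen (diffset A) = UNIV"
  obtains m :: nat
  where "measure lebesgue (convex hull (lat_to_real ` A)) * fact CARD('d) = real m"
    and "\<And>h. card (sumset h A) = ((h + CARD('d) + 1) choose (CARD('d) + 1))
            - (if m \<le> h then (h - m + CARD('d) + 1) choose (CARD('d) + 1) else 0)"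
proof -
  define B where "B = lat_to_real ` A"
  have "card (sumset h A) = card (sumset h B)" for h
    unfolding B_def sumset_image[of lat_to_real, OF lat_to_real_0 lat_to_real_add]
    by (simp add: card_image inj_on_subset[OF inj_lat_to_real])
  moreover have "axis i 1 \<in> add_subgroup_gen (diffset B)" for i
  proof -
    have "axis i 1 \<in> lat_to_real ` add_subgroup_gen (diffset A)"
      using gen by (metis UNIV_I image_eqI lat_to_real_axis)
    also have "\<dots> \<subseteq> add_subgroup_gen (diffset B)"
      unfolding B_def diffset_image[of lat_to_real, OF lat_to_real_diff]
      by (rule image_add_subgroup_gen_subset[OF lat_to_real_diff])
    finally show ?thesis .
  qed
  moreover have "finite B" "card B = CARD('d) + 2"
    using finA cardA by (simp_all add: B_def card_image inj_on_subset[OF inj_lat_to_real])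
  moreover have "a $ i \<in> \<int>" if "a \<in> B" for a i
    using that by (auto simp: B_def lat_to_real_def)
  ultimately show ?thesis
    using card_sumset_lattice_points[of B] that unfolding B_def by metis
qed

theorem theorem1p2:
  fixes A :: "(int ^ 'd) set" and d :: nat
  assumes dim: "CARD('d) = d"
    and finA: "finite A"
    and cardA: "card A = d + 2"
    and gen: "add_subgroup_gen (diffset A) = UNIV"
  defines "V \<equiv> measure lebesgue (convex hull (lat_to_real ` A)) * fact d"
  shows "(\<forall>h::nat. real h < V - real d - 1 \<longrightarrow>
            card (sumset h A) = (h + d + 1) choose (d + 1)) \<and>
         (\<forall>h::nat. real h \<ge> V - real d - 1 \<longrightarrow>
            real (card (sumset h A)) =
              real ((h + d + 1) choose (d + 1)) - ((real h - V + real d + 1) gchoose (d + 1)))"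
proof -
  obtain m where vol: "V = real m"
    and card: "\<And>h. card (sumset h A) = ((h + d + 1) choose (d + 1))
                 - (if m \<le> h then (h - m + d + 1) choose (d + 1) else 0)"
    using card_sumset_int_lattice[OF finA _ gen] cardA dim unfolding V_def by metis
  show ?thesis
    using card binomial_diff_eq_gbinomial[of m] by (auto simp: vol)
qed

end
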